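(* Let $\Sigma=[\sigma_{hk}]$ be a $p\times p$ Hermitian positive definite complex matrix and $\alpha=(n_1,m_1,\dots,n_p,m_p)\in\mathbb Z_{\ge0}^{2p}$ with $N=\{h:n_h\neq0\}$, $M=\{k:m_k\neq0\}$, $S^N_h=\{k\in M:\sigma_{hk}\neq0\}$ ($h\in N$), $S^M_k=\{h\in N:\sigma_{hk}\neq0\}$ ($k\in M$). Then the moments of $\mathcal{CN}_p(\Sigma)$ satisfy $$\nu(\alpha)=\sum_{k\in S^N_h}m_k\,\sigma_{hk}\,\nu(\alpha^-_{hk})\ \text{ for each }h\in N,\qquad \nu(\alpha)=\sum_{h\in S^M_k}n_h\,\sigma_{hk}\,\nu(\alpha^-_{hk})\ \text{ for each }k\in M,$$ where $\alpha^-_{hk}=\alpha-e_{2h-1}-e_{2k}$ (an empty sum being $0$).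
   Context: $\mathcal{CN}_p(\Sigma)$ has density $\varphi(z;\Sigma)=\frac{1}{\pi^p\det\Sigma}\exp(-z^*\Sigma^{-1}z)$ on $\mathbb C^p\cong\mathbb R^{2p}$; $\nu(\alpha)=\int_{\mathbb C^p}\prod_{j=1}^p z_j^{n_j}\bar z_j^{m_j}\varphi(z;\Sigma)\,dz$; $(e_j)$ is the canonical basis of $\mathbb R^{2p}$. *)

theory Defs
  imports "HOL-Analysis.Analysis"
begin

text \<open>The measure \<open>lborel\<close> on
  \<open>complex^'p\<close> is Lebesgue measure on C^p identified with R^(2p).\<close>

definition hermitian_mat :: "complex^'p^'p \<Rightarrow> bool" where
  "hermitian_mat S \<longleftrightarrow> (\<forall>i j. S $ i $ j = cnj (S $ j $ i))"

definition herm_form :: "complex^'p^'p \<Rightarrow> complex^'p \<Rightarrow> complex" where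
  "herm_form S z = (\<Sum>i\<in>UNIV. \<Sum>j\<in>UNIV. cnj (z $ i) * S $ i $ j * z $ j)"

definition pos_def_mat :: "complex^'p^'p \<Rightarrow> bool" where
  "pos_def_mat S \<longleftrightarrow> hermitian_mat S \<and> (\<forall>z. z \<noteq> 0 \<longrightarrow> Re (herm_form S z) > 0)"

definition cn_density :: "complex^'p^'p \<Rightarrow> complex^'p \<Rightarrow> complex" where
  "cn_density S z = exp (- herm_form (matrix_inv S) z) / (of_real (pi ^ CARD('p)) * det S)"

text \<open>Moment nu(alpha) with alpha = (n_1,m_1,...,n_p,m_p) given by n, m.\<close>
definition cn_moment :: "complex^'p^'p \<Rightarrow> ('p \<Rightarrow> nat) \<Rightarrow> ('p \<Rightarrow> nat) \<Rightarrow> complex" where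
  "cn_moment S n m = (LINT z|lborel. (\<Prod>j\<in>UNIV. (z $ j) ^ n j * cnj (z $ j) ^ m j) * cn_density S z)"

end

theory Submission
  imports Defs "HOL-Probability.Probability"
begin

text \<open>Gaussian integration by parts with Wirtinger derivatives.  Let \<open>A = \<Sigma>\<^sup>-\<^sup>1\<close> and
  \<open>E z = exp (- z\<^sup>* A z)\<close>, so that \<open>\<partial>E/\<partial>cnj z\<^sub>k = - (A z)\<^sub>k E\<close> and
  \<open>\<partial>E/\<partial>z\<^sub>k = - (z\<^sup>* A)\<^sub>k E\<close>.  The integral of the derivative of a polynomial times \<open>E\<close>
  vanishes, hence \<open>m\<^sub>k \<nu>(\<alpha> - e\<^sub>2\<^sub>k)\<close> is the \<open>\<nu>\<close>-integral of \<open>z\<^sup>\<alpha> (A z)\<^sub>k\<close> and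
  \<open>n\<^sub>h \<nu>(\<alpha> - e\<^sub>2\<^sub>h\<^sub>-\<^sub>1)\<close> that of \<open>z\<^sup>\<alpha> (z\<^sup>* A)\<^sub>h\<close>.  Writing one factor \<open>z\<^sub>h\<close> of the
  monomial as \<open>\<Sum>\<^sub>k \<sigma>\<^sub>h\<^sub>k (A z)\<^sub>k\<close> (resp. \<open>cnj z\<^sub>k\<close> as \<open>\<Sum>\<^sub>h (z\<^sup>* A)\<^sub>h \<sigma>\<^sub>h\<^sub>k\<close>) gives the two
  recursions.  Coercivity \<open>Re (z\<^sup>* A z) \<ge> c |z|\<^sup>2\<close> makes all integrands integrable, and
  integrals of derivatives vanish by the fundamental theorem of calculus along segments,
  Fubini, and translation invariance of Lebesgue measure.\<close>

section \<open>Polynomially bounded functions\<close>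

definition poly_bounded :: "('a::real_normed_vector \<Rightarrow> complex) \<Rightarrow> bool" where
  "poly_bounded f \<longleftrightarrow> continuous_on UNIV f \<and> (\<exists>C d. \<forall>z. norm (f z) \<le> C * (1 + norm z) ^ d)"

lemma poly_bounded_const: "poly_bounded (\<lambda>z. c)"
proof -
  have "\<forall>z. norm c \<le> norm c * (1 + norm z) ^ 0" by simp
  then show ?thesis unfolding poly_bounded_def by (blast intro: continuous_on_const)
qed

lemma poly_bound_nonneg:
  assumes "\<And>z. norm (f z) \<le> C * (1 + norm z) ^ d"
  shows "C \<ge> 0"
proof -
  have "norm (f 0) \<le> C" using assms[of 0] by simp
  then show ?thesis using norm_ge_zero order.trans by blast
qed

lemma poly_bounded_add:
  assumes "poly_bounded f" "poly_bounded g"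
  shows "poly_bounded (\<lambda>z. f z + g z)"
proof -
  from assms obtain C1 d1 C2 d2 where b1: "\<And>z. norm (f z) \<le> C1 * (1 + norm z) ^ d1"
    and b2: "\<And>z. norm (g z) \<le> C2 * (1 + norm z) ^ d2"
    and c: "continuous_on UNIV f" "continuous_on UNIV g" unfolding poly_bounded_def by blast
  have "norm (f z + g z) \<le> (C1 + C2) * (1 + norm z) ^ (d1 + d2)" for z
  proof -
    have "(1 + norm z) ^ d1 \<le> (1 + norm z) ^ (d1 + d2)" "(1 + norm z) ^ d2 \<le> (1 + norm z) ^ (d1 + d2)"
      by (intro power_increasing; simp)+
    then have "C1 * (1 + norm z) ^ d1 + C2 * (1 + norm z) ^ d2
        \<le> C1 * (1 + norm z) ^ (d1 + d2) + C2 * (1 + norm z) ^ (d1 + d2)"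
      using poly_bound_nonneg[OF b1] poly_bound_nonneg[OF b2] by (intro add_mono mult_left_mono)
    then show ?thesis
      using norm_triangle_ineq[of "f z" "g z"] b1[of z] b2[of z] by (simp add: algebra_simps)
  qed
  then show ?thesis using c unfolding poly_bounded_def by (auto intro!: continuous_intros)
qed

lemma poly_bounded_mult:
  assumes "poly_bounded f" "poly_bounded g"
  shows "poly_bounded (\<lambda>z. f z * g z)"
proof -
  from assms obtain C1 d1 C2 d2 where b1: "\<And>z. norm (f z) \<le> C1 * (1 + norm z) ^ d1"
    and b2: "\<And>z. norm (g z) \<le> C2 * (1 + norm z) ^ d2"
    and c: "continuous_on UNIV f" "continuous_on UNIV g" unfolding poly_bounded_def by blast
  have "norm (f z * g z) \<le> (C1 * C2) * (1 + norm z) ^ (d1 + d2)" for z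
    using mult_mono[OF b1[of z] b2[of z]] poly_bound_nonneg[OF b1]
    by (simp add: norm_mult power_add algebra_simps)
  then show ?thesis using c unfolding poly_bounded_def by (auto intro!: continuous_intros)
qed

lemma poly_bounded_sum:
  "finite I \<Longrightarrow> (\<And>i. i \<in> I \<Longrightarrow> poly_bounded (f i)) \<Longrightarrow> poly_bounded (\<lambda>z. \<Sum>i\<in>I. f i z)"
  by (induction I rule: finite_induct) (auto intro: poly_bounded_add poly_bounded_const)

lemma poly_bounded_prod:
  "finite I \<Longrightarrow> (\<And>i. i \<in> I \<Longrightarrow> poly_bounded (f i)) \<Longrightarrow> poly_bounded (\<lambda>z. \<Prod>i\<in>I. f i z)"
  by (induction I rule: finite_induct) (auto intro: poly_bounded_mult poly_bounded_const)

lemma poly_bounded_power: "poly_bounded f \<Longrightarrow> poly_bounded (\<lambda>z. f z ^ k)"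
  by (induction k) (auto intro: poly_bounded_mult poly_bounded_const)

lemma poly_bounded_cnj: "poly_bounded f \<Longrightarrow> poly_bounded (\<lambda>z. cnj (f z))"
  unfolding poly_bounded_def by (auto intro!: continuous_intros)

lemma poly_bounded_vec_nth: "poly_bounded (\<lambda>z::complex^'n. z $ j)"
  unfolding poly_bounded_def
proof (intro conjI exI allI)
  show "continuous_on UNIV (\<lambda>z::complex^'n. z $ j)"
    by (intro linear_continuous_on bounded_linear_vec_nth)
  show "norm (z $ j) \<le> 1 * (1 + norm z) ^ 1" for z :: "complex^'n"
    using Finite_Cartesian_Product.norm_nth_le[of z j] by simp
qed

section \<open>Integrability against a Gaussian\<close>

lemma integrable_exp_neg_norm_sq:
  fixes a :: real assumes "a > 0"
  shows "integrable lborel (\<lambda>z::'a::euclidean_space. exp (- a * norm z ^ 2))"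
proof -
  define s where "s = sqrt (1 / (2 * a))"
  have s: "s > 0" "2 * s ^ 2 = 1 / a" using assms by (simp_all add: s_def)
  have normal: "exp (- a * x ^ 2) = sqrt (2 * pi * s ^ 2) * normal_density 0 s x" for x
    using s unfolding normal_density_def by (simp add: mult.commute)
  have "integrable lborel (\<lambda>x::real. exp (- a * x ^ 2))"
    unfolding normal by (intro integrable_mult_right integrable_normal_density) (use s in simp)
  then have fin1: "(\<integral>\<^sup>+x. ennreal (exp (- a * x ^ 2)) \<partial>lborel) < \<infinity>"
    by (simp add: integrable_iff_bounded)
  have exp_prod: "exp (- (a * norm z ^ 2)) = (\<Prod>b\<in>Basis. exp (- (a * (z \<bullet> b) ^ 2)))" for z :: 'a
  proof -
    have "norm z ^ 2 = (\<Sum>b\<in>Basis. (z \<bullet> b) ^ 2)"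
      unfolding power2_norm_eq_inner by (subst euclidean_inner) (simp add: power2_eq_square)
    then show ?thesis by (simp add: exp_sum[symmetric] sum_distrib_left sum_negf)
  qed
  have "(\<integral>\<^sup>+z. ennreal (norm (exp (- a * norm (z::'a) ^ 2))) \<partial>lborel)
      = (\<integral>\<^sup>+z. (\<Prod>b\<in>Basis. ennreal (exp (- a * ((z::'a) \<bullet> b) ^ 2))) \<partial>lborel)"
    using exp_prod by (simp add: prod_ennreal abs_prod)
  also have "\<dots> = (\<Prod>b\<in>(Basis::'a set). (\<integral>\<^sup>+x. ennreal (exp (- a * x ^ 2)) \<partial>lborel))"
    by (rule nn_integral_lborel_prod) auto
  also have "\<dots> < \<infinity>" using fin1 by (simp add: power_less_top_ennreal)
  finally show ?thesis by (simp add: integrable_iff_bounded)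
qed

lemma power_le_fact_mult_exp:
  fixes x :: real assumes "x \<ge> 0"
  shows "x ^ n \<le> fact n * exp x"
proof -
  have "x ^ n /\<^sub>R fact n = (\<Sum>k\<in>{n}. x ^ k /\<^sub>R fact k)" by simp
  also have "\<dots> \<le> (\<Sum>k. x ^ k /\<^sub>R fact k)"
    by (rule sum_le_suminf) (use assms summable_exp in auto)
  also have "\<dots> = exp x" using exp_converges sums_unique by metis
  finally have "x ^ n / fact n \<le> exp x" by (simp add: divide_inverse mult.commute)
  then show ?thesis by (simp add: divide_le_eq mult.commute)
qed

lemma poly_mult_gaussian_le_half_gaussian:
  fixes r c :: real assumes "r \<ge> 0" "c > 0"
  shows "(1 + r) ^ d * exp (- c * r ^ 2) \<le> (fact d * exp (1 + 1 / (2 * c))) * exp (- (c / 2) * r ^ 2)"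
proof -
  have "r - c * r ^ 2 \<le> 1 / (2 * c) - (c / 2) * r ^ 2"
  proof -
    have "0 \<le> (c * r - 1) ^ 2 / (2 * c)" using assms by simp
    also have "\<dots> = (c / 2) * r ^ 2 - r + 1 / (2 * c)"
      using assms by (simp add: field_simps power2_eq_square)
    finally show ?thesis by simp
  qed
  have "(1 + r) ^ d * exp (- c * r ^ 2) \<le> (fact d * exp (1 + r)) * exp (- c * r ^ 2)"
    using power_le_fact_mult_exp[of "1 + r" d] assms by (intro mult_right_mono) auto
  also have "\<dots> = fact d * exp (1 + r - c * r ^ 2)" by (simp add: mult.assoc flip: exp_add)
  also have "\<dots> \<le> fact d * exp (1 + 1 / (2 * c) - (c / 2) * r ^ 2)"
    using \<open>r - c * r ^ 2 \<le> _\<close> by (intro mult_left_mono) auto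
  also have "\<dots> = (fact d * exp (1 + 1 / (2 * c))) * exp (- (c / 2) * r ^ 2)"
    by (simp add: exp_add[symmetric] exp_diff exp_minus field_simps)
  finally show ?thesis .
qed

lemma integrable_poly_bounded_mult_gaussian:
  fixes f E :: "'a::euclidean_space \<Rightarrow> complex"
  assumes "poly_bounded f" "continuous_on UNIV E" "c > 0" "\<And>z. norm (E z) \<le> exp (- c * norm z ^ 2)"
  shows "integrable lborel (\<lambda>z. f z * E z)"
proof -
  obtain C d where fb: "\<And>z. norm (f z) \<le> C * (1 + norm z) ^ d" and fc: "continuous_on UNIV f"
    using assms(1) unfolding poly_bounded_def by blast
  define K where "K = C * (fact d * exp (1 + 1 / (2 * c)))"
  show ?thesis
  proof (rule Bochner_Integration.integrable_bound)
    show "integrable lborel (\<lambda>z::'a. K * exp (- (c / 2) * norm z ^ 2))"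
      using integrable_exp_neg_norm_sq[of "c / 2"] assms(3) by (intro integrable_mult_right) auto
    show "(\<lambda>z. f z * E z) \<in> borel_measurable lborel"
      using fc assms(2) by (simp add: borel_measurable_continuous_onI continuous_on_mult)
    show "AE z in lborel. norm (f z * E z) \<le> norm (K * exp (- (c / 2) * norm z ^ 2))"
    proof (intro AE_I2)
      fix z :: 'a
      have "norm (f z) * norm (E z) \<le> (C * (1 + norm z) ^ d) * exp (- c * norm z ^ 2)"
        by (rule mult_mono[OF fb assms(4)]) (use poly_bound_nonneg[OF fb] in auto)
      then have "norm (f z * E z) \<le> C * ((1 + norm z) ^ d * exp (- c * norm z ^ 2))"
        by (simp add: norm_mult mult.assoc)
      also have "\<dots> \<le> K * exp (- (c / 2) * norm z ^ 2)"
        using poly_mult_gaussian_le_half_gaussian[of "norm z" c d] assms(3) poly_bound_nonneg[OF fb]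
        unfolding K_def by (simp add: mult_left_mono mult.assoc)
      finally show "norm (f z * E z) \<le> norm (K * exp (- (c / 2) * norm z ^ 2))" by simp
    qed
  qed
qed

section \<open>Integrals of derivatives vanish\<close>

lemma integral_lborel_translate:
  fixes f :: "'a::euclidean_space \<Rightarrow> 'b::{banach, second_countable_topology}"
  assumes "f \<in> borel_measurable borel"
  shows "(\<integral>z. f (z + c) \<partial>lborel) = integral\<^sup>L lborel f"
proof -
  have "integral\<^sup>L lborel f = integral\<^sup>L (distr lborel borel ((+) c)) f"
    by (simp add: lborel_distr_plus)
  also have "\<dots> = (\<integral>z. f (c + z) \<partial>lborel)"
    using assms by (intro integral_distr) auto
  finally show ?thesis by (simp add: add.commute)
qed

lemma integrable_lborel_translate:
  fixes f :: "'a::euclidean_space \<Rightarrow> 'b::{banach, second_countable_topology}"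
  assumes "integrable lborel f"
  shows "integrable lborel (\<lambda>z. f (z + c))"
proof -
  have "integrable (distr lborel borel ((+) c)) f" using assms by (simp add: lborel_distr_plus)
  then have "integrable lborel (\<lambda>z. f (c + z))"
    using assms by (subst (asm) integrable_distr_eq) auto
  then show ?thesis by (simp add: add.commute)
qed

lemma integral_segment_derivative:
  fixes g :: "'a::euclidean_space \<Rightarrow> 'b::euclidean_space"
  assumes deriv: "\<And>w. (g has_derivative Dg w) (at w)"
    and cont: "continuous_on UNIV (\<lambda>w. Dg w v)"
  shows "(\<integral>s. indicator {0..1::real} s *\<^sub>R Dg (z + s *\<^sub>R v) v \<partial>lborel) = g (z + v) - g z"
proof -
  have "interval_lebesgue_integral lborel (ereal 0) (ereal 1) (\<lambda>s. Dg (z + s *\<^sub>R v) v)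
      = g (z + 1 *\<^sub>R v) - g (z + 0 *\<^sub>R v)"
  proof (rule interval_integral_FTC_finite[where F = "\<lambda>s. g (z + s *\<^sub>R v)"])
    show "continuous_on {min 0 1..max 0 1} (\<lambda>s. Dg (z + s *\<^sub>R v) v)"
      by (rule continuous_on_compose2[OF cont]) (auto intro!: continuous_intros)
    fix s :: real
    have "((\<lambda>s. g (z + s *\<^sub>R v)) has_derivative (\<lambda>x. Dg (z + s *\<^sub>R v) (x *\<^sub>R v)))
        (at s within {min 0 1..max 0 1})"
      by (rule has_derivative_compose[OF _ deriv]) (auto intro!: derivative_eq_intros)
    moreover have "Dg (z + s *\<^sub>R v) (x *\<^sub>R v) = x *\<^sub>R Dg (z + s *\<^sub>R v) v" for x
      using linear_scale[OF has_derivative_linear[OF deriv]] .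
    ultimately show "((\<lambda>s. g (z + s *\<^sub>R v)) has_vector_derivative Dg (z + s *\<^sub>R v) v)
        (at s within {min 0 1..max (0::real) 1})"
      unfolding has_vector_derivative_def by simp
  qed
  then show ?thesis by (simp add: interval_integral_Icc set_lebesgue_integral_def)
qed

lemma integral_average_of_translates:
  fixes h :: "'a::euclidean_space \<Rightarrow> 'b::{banach, second_countable_topology}"
  assumes h: "integrable lborel h"
  shows "(\<integral>z. (\<integral>s. indicator {0..1::real} s *\<^sub>R h (z + s *\<^sub>R v) \<partial>lborel) \<partial>lborel)
       = integral\<^sup>L lborel h"
proof -
  have [measurable]: "h \<in> borel_measurable borel" using h by auto
  define F where "F s z = indicator {0..1::real} s *\<^sub>R h (z + s *\<^sub>R v)" for s z
  have translate: "(\<integral>z. f (z + s *\<^sub>R v) \<partial>lborel) = integral\<^sup>L lborel f"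
    if "f \<in> borel_measurable borel" for f :: "'a \<Rightarrow> 'c::{banach, second_countable_topology}" and s
    using that by (rule integral_lborel_translate)
  have "integrable (lborel \<Otimes>\<^sub>M lborel) (case_prod F)"
  proof (rule lborel_pair.Fubini_integrable, simp_all only: case_prod_conv)
    show "case_prod F \<in> borel_measurable (lborel \<Otimes>\<^sub>M lborel)" unfolding F_def by measurable
    have "(\<integral>z. norm (F s z) \<partial>lborel) = indicator {0..1} s * (\<integral>z. norm (h z) \<partial>lborel)" for s
      using translate[of "\<lambda>z. norm (h z)" s] by (simp add: F_def)
    then show "integrable lborel (\<lambda>s. \<integral>z. norm (F s z) \<partial>lborel)"
      by (auto intro!: integrable_mult_left integrable_real_indicator)
    show "AE s in lborel. integrable lborel (F s)"
      unfolding F_def using integrable_lborel_translate[OF h]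
      by (intro AE_I2 integrable_scaleR_right) auto
  qed
  then have "(\<integral>z. (\<integral>s. F s z \<partial>lborel) \<partial>lborel) = (\<integral>s. (\<integral>z. F s z \<partial>lborel) \<partial>lborel)"
    by (rule lborel_pair.Fubini_integral)
  also have "\<dots> = (\<integral>s. indicator {0..1::real} s *\<^sub>R integral\<^sup>L lborel h \<partial>lborel)"
    using translate[of h] by (simp add: F_def)
  also have "\<dots> = integral\<^sup>L lborel h"
    by (subst integral_scaleR_left) auto
  finally show ?thesis by (simp add: F_def)
qed

lemma integral_directional_derivative_eq_0:
  fixes g :: "'a::euclidean_space \<Rightarrow> 'b::euclidean_space"
  assumes deriv: "\<And>w. (g has_derivative Dg w) (at w)"
    and cont: "continuous_on UNIV (\<lambda>w. Dg w v)"
    and "integrable lborel g" "integrable lborel (\<lambda>w. Dg w v)"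
  shows "(\<integral>w. Dg w v \<partial>lborel) = 0"
proof -
  have "(\<integral>w. Dg w v \<partial>lborel)
      = (\<integral>z. (\<integral>s. indicator {0..1::real} s *\<^sub>R Dg (z + s *\<^sub>R v) v \<partial>lborel) \<partial>lborel)"
    using integral_average_of_translates[OF assms(4)] by simp
  also have "\<dots> = (\<integral>z. g (z + v) - g z \<partial>lborel)"
    using integral_segment_derivative[OF deriv cont] by simp
  also have "\<dots> = (\<integral>z. g (z + v) \<partial>lborel) - integral\<^sup>L lborel g"
    by (rule Bochner_Integration.integral_diff[OF integrable_lborel_translate]) fact+
  also have "(\<integral>z. g (z + v) \<partial>lborel) = integral\<^sup>L lborel g"
    using assms(3) by (intro integral_lborel_translate) auto
  finally show ?thesis by simp
qed

section \<open>Mixed monomials and the Gaussian kernel\<close>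

definition mixed_monomial :: "('p \<Rightarrow> nat) \<Rightarrow> ('p \<Rightarrow> nat) \<Rightarrow> complex^'p \<Rightarrow> complex" where
  "mixed_monomial n m z = (\<Prod>j\<in>UNIV. (z $ j) ^ n j * cnj (z $ j) ^ m j)"

definition mixed_monomial_deriv ::
    "('p \<Rightarrow> nat) \<Rightarrow> ('p \<Rightarrow> nat) \<Rightarrow> complex^'p \<Rightarrow> complex^'p \<Rightarrow> complex" where
  "mixed_monomial_deriv n m w u = (\<Sum>j\<in>UNIV.
      of_nat (n j) * u $ j * mixed_monomial (n(j := n j - 1)) m w
    + of_nat (m j) * cnj (u $ j) * mixed_monomial n (m(j := m j - 1)) w)"

definition herm_form_deriv :: "complex^'p^'p \<Rightarrow> complex^'p \<Rightarrow> complex^'p \<Rightarrow> complex" where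
  "herm_form_deriv A w u =
     (\<Sum>i\<in>UNIV. \<Sum>j\<in>UNIV. cnj (u $ i) * A $ i $ j * w $ j + cnj (w $ i) * A $ i $ j * u $ j)"

definition gauss_kernel :: "complex^'p^'p \<Rightarrow> complex^'p \<Rightarrow> complex" where
  "gauss_kernel A z = exp (- herm_form A z)"

definition kernel_moment :: "complex^'p^'p \<Rightarrow> ('p \<Rightarrow> nat) \<Rightarrow> ('p \<Rightarrow> nat) \<Rightarrow> complex" where
  "kernel_moment A n m = (\<integral>w. mixed_monomial n m w * gauss_kernel A w \<partial>lborel)"

lemma cn_moment_eq_kernel_moment:
  "cn_moment S n m = kernel_moment (matrix_inv S) n m / (of_real (pi ^ CARD('p)) * det S)"
  for S :: "complex^'p^'p"
  unfolding cn_moment_def cn_density_def kernel_moment_def mixed_monomial_def gauss_kernel_def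
  by (simp add: times_divide_eq_right)

lemma mixed_monomial_split:
  "mixed_monomial n m w =
     (w $ j) ^ n j * cnj (w $ j) ^ m j * (\<Prod>i\<in>UNIV - {j}. (w $ i) ^ n i * cnj (w $ i) ^ m i)"
  unfolding mixed_monomial_def by (rule prod.remove) auto

lemma mixed_monomial_upd_n:
  "mixed_monomial (n(j := k)) m w =
     (w $ j) ^ k * cnj (w $ j) ^ m j * (\<Prod>i\<in>UNIV - {j}. (w $ i) ^ n i * cnj (w $ i) ^ m i)"
  by (subst mixed_monomial_split[of _ _ _ j]) (auto intro!: prod.cong)

lemma mixed_monomial_upd_m:
  "mixed_monomial n (m(j := k)) w =
     (w $ j) ^ n j * cnj (w $ j) ^ k * (\<Prod>i\<in>UNIV - {j}. (w $ i) ^ n i * cnj (w $ i) ^ m i)"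
  by (subst mixed_monomial_split[of _ _ _ j]) (auto intro!: prod.cong)

lemma mixed_monomial_dec_n:
  assumes "n h \<noteq> 0"
  shows "mixed_monomial n m w = w $ h * mixed_monomial (n(h := n h - 1)) m w"
proof -
  have "(w $ h) ^ n h = w $ h * (w $ h) ^ (n h - 1)"
    using assms by (metis Suc_pred' not_gr_zero power_Suc)
  then show ?thesis
    unfolding mixed_monomial_upd_n mixed_monomial_split[of n m w h] by (simp add: mult.assoc)
qed

lemma mixed_monomial_dec_m:
  assumes "m k \<noteq> 0"
  shows "mixed_monomial n m w = cnj (w $ k) * mixed_monomial n (m(k := m k - 1)) w"
proof -
  have "cnj (w $ k) ^ m k = cnj (w $ k) * cnj (w $ k) ^ (m k - 1)"
    using assms by (metis Suc_pred' not_gr_zero power_Suc)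
  then show ?thesis
    unfolding mixed_monomial_upd_m mixed_monomial_split[of n m w k] by (simp add: algebra_simps)
qed

lemma has_derivative_vec_nth: "((\<lambda>z::complex^'n. z $ i) has_derivative (\<lambda>u. u $ i)) (at w)"
  by (rule bounded_linear.has_derivative[OF bounded_linear_vec_nth has_derivative_ident])

lemma has_derivative_mixed_monomial:
  "(mixed_monomial n m has_derivative mixed_monomial_deriv n m w) (at w)"
  unfolding mixed_monomial_def[abs_def]
  by (rule has_derivative_eq_rhs[OF has_derivative_prod[OF has_derivative_mult[OF
        has_derivative_power[OF has_derivative_vec_nth]
        has_derivative_power[OF has_derivative_cnj[OF has_derivative_vec_nth]]]]])
     (auto simp: fun_eq_iff mixed_monomial_deriv_def mixed_monomial_upd_n mixed_monomial_upd_m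
        algebra_simps intro!: sum.cong)

lemma has_derivative_herm_form: "(herm_form A has_derivative herm_form_deriv A w) (at w)"
  unfolding herm_form_def[abs_def]
  by (rule has_derivative_eq_rhs[OF has_derivative_sum[OF has_derivative_sum[OF
        has_derivative_mult[OF has_derivative_mult[OF
        has_derivative_cnj[OF has_derivative_vec_nth] has_derivative_const] has_derivative_vec_nth]]]])
     (simp add: fun_eq_iff herm_form_deriv_def algebra_simps sum.distrib)

lemma has_derivative_gauss_kernel:
  "(gauss_kernel A has_derivative (\<lambda>u. - herm_form_deriv A w u * gauss_kernel A w)) (at w)"
  unfolding gauss_kernel_def[abs_def]
  by (rule has_derivative_eq_rhs,
      rule has_derivative_compose[OF has_derivative_minus[OF has_derivative_herm_form]
        DERIV_exp[unfolded has_field_derivative_def]])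
     (simp add: fun_eq_iff)

lemma continuous_on_gauss_kernel: "continuous_on UNIV (gauss_kernel A)"
  using has_derivative_gauss_kernel
  by (meson continuous_at_imp_continuous_on has_derivative_continuous)

lemma poly_bounded_mixed_monomial: "poly_bounded (mixed_monomial n m)"
  unfolding mixed_monomial_def[abs_def]
  by (intro poly_bounded_prod poly_bounded_mult poly_bounded_power poly_bounded_cnj
      poly_bounded_vec_nth) auto

lemma poly_bounded_mixed_monomial_deriv: "poly_bounded (\<lambda>w. mixed_monomial_deriv n m w u)"
  unfolding mixed_monomial_deriv_def
  by (intro poly_bounded_sum poly_bounded_add poly_bounded_mult poly_bounded_const
      poly_bounded_mixed_monomial) auto

lemma poly_bounded_herm_form_deriv: "poly_bounded (\<lambda>w. herm_form_deriv A w u)"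
  unfolding herm_form_deriv_def
  by (intro poly_bounded_sum poly_bounded_add poly_bounded_mult poly_bounded_const
      poly_bounded_vec_nth poly_bounded_cnj) auto

lemma poly_bounded_matrix_vector_mult: "poly_bounded (\<lambda>w. (A *v w) $ k)"
  unfolding matrix_vector_mult_def
  by (simp, intro poly_bounded_sum poly_bounded_mult poly_bounded_const poly_bounded_vec_nth) auto

lemma poly_bounded_cnj_vector_matrix_mult: "poly_bounded (\<lambda>w. ((\<chi> i. cnj (w $ i)) v* A) $ k)"
  unfolding vector_matrix_mult_def
  by (simp, intro poly_bounded_sum poly_bounded_mult poly_bounded_const poly_bounded_vec_nth
      poly_bounded_cnj) auto

lemma sum_axis_nth:
  fixes f :: "'n::finite \<Rightarrow> 'a::zero \<Rightarrow> 'b::comm_monoid_add"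
  assumes "\<And>j. f j 0 = 0"
  shows "(\<Sum>j\<in>UNIV. f j (axis k x $ j)) = f k x"
proof -
  have "(\<Sum>j\<in>UNIV. f j (axis k x $ j)) = (\<Sum>j\<in>UNIV. if j = k then f k x else 0)"
    by (rule sum.cong) (auto simp: axis_def assms)
  then show ?thesis by simp
qed

lemma mixed_monomial_deriv_axis:
  "mixed_monomial_deriv n m w (axis k x) =
     of_nat (n k) * x * mixed_monomial (n(k := n k - 1)) m w
   + of_nat (m k) * cnj x * mixed_monomial n (m(k := m k - 1)) w"
  unfolding mixed_monomial_deriv_def
  by (rule sum_axis_nth[where f = "\<lambda>j y. of_nat (n j) * y * mixed_monomial (n(j := n j - 1)) m w
        + of_nat (m j) * cnj y * mixed_monomial n (m(j := m j - 1)) w"]) simp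

lemma herm_form_deriv_axis:
  "herm_form_deriv A w (axis k x) = cnj x * (A *v w) $ k + x * ((\<chi> i. cnj (w $ i)) v* A) $ k"
proof -
  have "herm_form_deriv A w u =
      (\<Sum>i\<in>UNIV. cnj (u $ i) * (A *v w) $ i + u $ i * ((\<chi> i. cnj (w $ i)) v* A) $ i)" for u
    unfolding herm_form_deriv_def matrix_vector_mult_def vector_matrix_mult_def
    by (simp add: sum.distrib sum_distrib_left algebra_simps, subst (2) sum.swap,
        simp add: algebra_simps)
  then show ?thesis
    by (simp only:)
       (rule sum_axis_nth[where f = "\<lambda>i y. cnj y * (A *v w) $ i + y * ((\<chi> i. cnj (w $ i)) v* A) $ i"],
        simp)
qed

lemma complex_linear_cnj_linear_coeffs:
  fixes a b c d :: complex
  assumes "\<And>x. a * x + b * cnj x = c * x + d * cnj x"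
  shows "a = c" "b = d"
proof -
  have one: "a + b = c + d" using assms[of 1] by simp
  have "\<i> * (a - b) = \<i> * (c - d)" using assms[of \<i>] by (simp add: algebra_simps)
  then have i: "a - b = c - d" by simp
  have "a = ((a + b) + (a - b)) / 2" "b = ((a + b) - (a - b)) / 2" by simp_all
  then show "a = c" "b = d" unfolding one i by simp_all
qed

locale coercive_form =
  fixes A :: "complex^'p^'p" and c :: real
  assumes c_pos: "c > 0" and coercive: "\<And>z. c * norm z ^ 2 \<le> Re (herm_form A z)"
begin

lemma integrable_poly_bounded_mult_gauss_kernel:
  "poly_bounded f \<Longrightarrow> integrable lborel (\<lambda>z. f z * gauss_kernel A z)"
  using c_pos coercive
  by (intro integrable_poly_bounded_mult_gaussian continuous_on_gauss_kernel)
     (auto simp: gauss_kernel_def)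

lemma integral_mixed_monomial_deriv:
  "(\<integral>w. mixed_monomial_deriv n m w u * gauss_kernel A w \<partial>lborel)
   = (\<integral>w. mixed_monomial n m w * herm_form_deriv A w u * gauss_kernel A w \<partial>lborel)"
proof -
  note integrable = integrable_poly_bounded_mult_gauss_kernel
  have "(\<integral>w. (mixed_monomial_deriv n m w u - mixed_monomial n m w * herm_form_deriv A w u)
      * gauss_kernel A w \<partial>lborel) = 0"
  proof (rule integral_directional_derivative_eq_0)
    show "((\<lambda>z. mixed_monomial n m z * gauss_kernel A z) has_derivative
        (\<lambda>u. (mixed_monomial_deriv n m w u - mixed_monomial n m w * herm_form_deriv A w u)
          * gauss_kernel A w)) (at w)" for w
      by (rule has_derivative_eq_rhs[OF has_derivative_mult[OF
          has_derivative_mixed_monomial has_derivative_gauss_kernel]])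
         (simp add: fun_eq_iff algebra_simps)
    show "continuous_on UNIV (\<lambda>w. (mixed_monomial_deriv n m w u
        - mixed_monomial n m w * herm_form_deriv A w u) * gauss_kernel A w)"
      using poly_bounded_mixed_monomial_deriv[of n m u] poly_bounded_mixed_monomial[of n m]
        poly_bounded_herm_form_deriv[of A u] continuous_on_gauss_kernel[of A]
      unfolding poly_bounded_def by (auto intro!: continuous_intros)
    show "integrable lborel (\<lambda>z. mixed_monomial n m z * gauss_kernel A z)"
      by (intro integrable poly_bounded_mixed_monomial)
    show "integrable lborel (\<lambda>w. (mixed_monomial_deriv n m w u
        - mixed_monomial n m w * herm_form_deriv A w u) * gauss_kernel A w)"
      unfolding left_diff_distrib
      by (intro Bochner_Integration.integrable_diff integrable poly_bounded_mult
          poly_bounded_mixed_monomial poly_bounded_mixed_monomial_deriv poly_bounded_herm_form_deriv)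
  qed
  then show ?thesis
    unfolding left_diff_distrib
    by (subst (asm) Bochner_Integration.integral_diff)
       (auto intro!: integrable poly_bounded_mult poly_bounded_mixed_monomial
          poly_bounded_mixed_monomial_deriv poly_bounded_herm_form_deriv)
qed

text \<open>The derivative along \<open>axis k x\<close> is \<open>x \<partial>/\<partial>z\<^sub>k + cnj x \<partial>/\<partial>cnj z\<^sub>k\<close>; comparing the
  coefficients of \<open>x\<close> and \<open>cnj x\<close> separates the two Wirtinger derivatives.\<close>

lemma integral_wirtinger_identity:
  "(of_nat (n k) * kernel_moment A (n(k := n k - 1)) m) * x
   + (of_nat (m k) * kernel_moment A n (m(k := m k - 1))) * cnj x
   = (\<integral>w. mixed_monomial n m w * ((\<chi> i. cnj (w $ i)) v* A) $ k * gauss_kernel A w \<partial>lborel) * x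
   + (\<integral>w. mixed_monomial n m w * (A *v w) $ k * gauss_kernel A w \<partial>lborel) * cnj x"
proof -
  note integrable = integrable_poly_bounded_mult_gauss_kernel
  have "(\<integral>w. mixed_monomial_deriv n m w (axis k x) * gauss_kernel A w \<partial>lborel)
      = (\<integral>w. (of_nat (n k) * x) * (mixed_monomial (n(k := n k - 1)) m w * gauss_kernel A w)
          + (of_nat (m k) * cnj x) * (mixed_monomial n (m(k := m k - 1)) w * gauss_kernel A w) \<partial>lborel)"
    by (simp add: mixed_monomial_deriv_axis algebra_simps)
  also have "\<dots> = (of_nat (n k) * kernel_moment A (n(k := n k - 1)) m) * x
      + (of_nat (m k) * kernel_moment A n (m(k := m k - 1))) * cnj x"
    unfolding kernel_moment_def
    by (subst Bochner_Integration.integral_add)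
       (auto intro!: integrable integrable_mult_right poly_bounded_mixed_monomial)
  finally have lhs: "(\<integral>w. mixed_monomial_deriv n m w (axis k x) * gauss_kernel A w \<partial>lborel) = \<dots>" .
  have "(\<integral>w. mixed_monomial n m w * herm_form_deriv A w (axis k x) * gauss_kernel A w \<partial>lborel)
      = (\<integral>w. x * (mixed_monomial n m w * ((\<chi> i. cnj (w $ i)) v* A) $ k * gauss_kernel A w)
          + cnj x * (mixed_monomial n m w * (A *v w) $ k * gauss_kernel A w) \<partial>lborel)"
    by (simp add: herm_form_deriv_axis algebra_simps)
  also have "\<dots> = (\<integral>w. mixed_monomial n m w * ((\<chi> i. cnj (w $ i)) v* A) $ k * gauss_kernel A w \<partial>lborel) * x
      + (\<integral>w. mixed_monomial n m w * (A *v w) $ k * gauss_kernel A w \<partial>lborel) * cnj x"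
    by (subst Bochner_Integration.integral_add,
        (intro integrable_mult_right integrable poly_bounded_mult poly_bounded_mixed_monomial
          poly_bounded_matrix_vector_mult poly_bounded_cnj_vector_matrix_mult)+)
       (simp add: mult.commute)
  finally show ?thesis using lhs integral_mixed_monomial_deriv by simp
qed

lemma kernel_moment_dec_m:
  "of_nat (m k) * kernel_moment A n (m(k := m k - 1))
   = (\<integral>w. mixed_monomial n m w * (A *v w) $ k * gauss_kernel A w \<partial>lborel)"
  by (rule complex_linear_cnj_linear_coeffs(2)[OF integral_wirtinger_identity])

lemma kernel_moment_dec_n:
  "of_nat (n k) * kernel_moment A (n(k := n k - 1)) m
   = (\<integral>w. mixed_monomial n m w * ((\<chi> i. cnj (w $ i)) v* A) $ k * gauss_kernel A w \<partial>lborel)"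
  by (rule complex_linear_cnj_linear_coeffs(1)[OF integral_wirtinger_identity])

end

section \<open>Positive definite matrices\<close>

lemma herm_form_eq_matrix_vector_mult: "herm_form M z = (\<Sum>i\<in>UNIV. cnj (z $ i) * (M *v z) $ i)"
  unfolding herm_form_def matrix_vector_mult_def by (simp add: sum_distrib_left mult.assoc)

lemma herm_form_scaleR: "herm_form A (r *\<^sub>R z) = of_real (r ^ 2) * herm_form A z"
  unfolding herm_form_def vector_scaleR_component
  by (simp add: sum_distrib_left scaleR_conv_of_real power2_eq_square algebra_simps)

lemma pos_def_invertible:
  assumes "pos_def_mat S"
  shows "invertible S"
proof -
  have "x = 0" if "S *v x = 0" for x
  proof -
    have "herm_form S x = 0" using that by (simp add: herm_form_eq_matrix_vector_mult)
    then show ?thesis using assms unfolding pos_def_mat_def by force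
  qed
  then show ?thesis
    unfolding invertible_left_inverse by (simp add: matrix_left_invertible_ker)
qed

lemma matrix_inv:
  assumes "invertible S"
  shows "S ** matrix_inv S = mat 1" "matrix_inv S ** S = mat 1"
proof -
  have "S ** matrix_inv S = mat 1 \<and> matrix_inv S ** S = mat 1"
    using assms unfolding invertible_def matrix_inv_def by (rule someI_ex)
  then show "S ** matrix_inv S = mat 1" "matrix_inv S ** S = mat 1" by auto
qed

text \<open>With \<open>w = \<Sigma>\<^sup>-\<^sup>1 z\<close>, \<open>z\<^sup>* \<Sigma>\<^sup>-\<^sup>1 z = cnj (w\<^sup>* \<Sigma> w)\<close>.\<close>

lemma pos_def_herm_form_matrix_inv_pos:
  assumes "pos_def_mat S" "z \<noteq> 0"
  shows "Re (herm_form (matrix_inv S) z) > 0"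
proof -
  define w where "w = matrix_inv S *v z"
  have Sw: "S *v w = z"
    using matrix_inv(1)[OF pos_def_invertible[OF assms(1)]]
    by (simp add: w_def matrix_vector_mul_assoc)
  then have "w \<noteq> 0" using assms(2) by auto
  then have "Re (herm_form S w) > 0" using assms(1) unfolding pos_def_mat_def by auto
  moreover have "herm_form (matrix_inv S) z = cnj (herm_form S w)"
    by (simp add: herm_form_eq_matrix_vector_mult Sw flip: w_def) (simp add: mult.commute)
  ultimately show ?thesis by simp
qed

text \<open>A positive continuous quadratic form attains a positive minimum \<open>c\<close> on the unit sphere,
  and is therefore bounded below by \<open>c |z|\<^sup>2\<close>.\<close>

lemma pos_def_matrix_inv_coercive:
  assumes "pos_def_mat S"
  shows "\<exists>c. coercive_form (matrix_inv S) c"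
proof -
  let ?q = "\<lambda>z. Re (herm_form (matrix_inv S) z)"
  have "continuous_on UNIV (herm_form (matrix_inv S))"
    by (intro continuous_at_imp_continuous_on ballI
        has_derivative_continuous[OF has_derivative_herm_form])
  then have cont: "continuous_on UNIV ?q" by (intro continuous_intros)
  have "axis undefined 1 /\<^sub>R norm (axis undefined (1::complex)) \<in> sphere (0::complex^'a) 1"
    by (simp add: axis_eq_0_iff)
  then have "sphere (0::complex^'a) 1 \<noteq> {}" by blast
  then obtain z0 where z0: "z0 \<in> sphere 0 1" and min: "\<And>y. y \<in> sphere 0 1 \<Longrightarrow> ?q z0 \<le> ?q y"
    using continuous_attains_inf[OF compact_sphere _ continuous_on_subset[OF cont]] by blast
  have "z0 \<noteq> 0" using z0 by auto
  then have "?q z0 > 0" using pos_def_herm_form_matrix_inv_pos[OF assms] by blast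
  moreover have "?q z0 * norm z ^ 2 \<le> ?q z" for z
  proof (cases "z = 0")
    case False
    have "?q z = norm z ^ 2 * ?q (z /\<^sub>R norm z)"
      using herm_form_scaleR[of "matrix_inv S" "norm z" "z /\<^sub>R norm z"] False by simp
    moreover have "?q z0 \<le> ?q (z /\<^sub>R norm z)" using False by (intro min) simp
    ultimately show ?thesis by (metis mult.commute mult_left_mono zero_le_power2)
  qed (simp add: herm_form_def)
  ultimately show ?thesis unfolding coercive_form_def by blast
qed

lemma vec_nth_eq_sum_matrix_vector_mult:
  assumes "S ** A = mat 1"
  shows "w $ h = (\<Sum>k\<in>UNIV. S $ h $ k * (A *v w) $ k)"
proof -
  have "w = S *v (A *v w)" by (simp add: matrix_vector_mul_assoc assms)
  then have "w $ h = (S *v (A *v w)) $ h" by simp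
  then show ?thesis by (simp add: matrix_vector_mult_def)
qed

lemma cnj_vec_nth_eq_sum_vector_matrix_mult:
  assumes "A ** S = mat 1"
  shows "cnj (w $ k) = (\<Sum>h\<in>UNIV. ((\<chi> i. cnj (w $ i)) v* A) $ h * S $ h $ k)"
proof -
  have "(\<chi> i. cnj (w $ i)) = ((\<chi> i. cnj (w $ i)) v* A) v* S"
    by (simp add: vector_matrix_mul_assoc assms)
  then have "cnj (w $ k) = (((\<chi> i. cnj (w $ i)) v* A) v* S) $ k" by (metis vec_lambda_beta)
  then show ?thesis by (simp add: vector_matrix_mult_def mult.commute)
qed

context coercive_form
begin

lemma kernel_moment_recursion_n:
  assumes "S ** A = mat 1" "n h \<noteq> 0"
  shows "kernel_moment A n m = (\<Sum>k\<in>UNIV.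
    of_nat (m k) * S $ h $ k * kernel_moment A (n(h := n h - 1)) (m(k := m k - 1)))"
proof -
  let ?n = "n(h := n h - 1)"
  have "kernel_moment A n m = (\<integral>w. (\<Sum>k\<in>UNIV.
      S $ h $ k * (mixed_monomial ?n m w * (A *v w) $ k * gauss_kernel A w)) \<partial>lborel)"
    unfolding kernel_moment_def mixed_monomial_dec_n[where n = n and h = h, OF assms(2)]
      vec_nth_eq_sum_matrix_vector_mult[OF assms(1), of _ h]
    by (simp add: sum_distrib_left sum_distrib_right mult_ac)
  also have "\<dots> = (\<Sum>k\<in>UNIV. S $ h $ k *
      (\<integral>w. mixed_monomial ?n m w * (A *v w) $ k * gauss_kernel A w \<partial>lborel))"
    by (subst Bochner_Integration.integral_sum)
       (auto intro!: integrable_mult_right integrable_poly_bounded_mult_gauss_kernel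
         poly_bounded_mult poly_bounded_mixed_monomial poly_bounded_matrix_vector_mult)
  also have "\<dots> = (\<Sum>k\<in>UNIV. S $ h $ k * (of_nat (m k) * kernel_moment A ?n (m(k := m k - 1))))"
    by (simp only: kernel_moment_dec_m)
  finally show ?thesis by (simp add: mult_ac)
qed

lemma kernel_moment_recursion_m:
  assumes "A ** S = mat 1" "m k \<noteq> 0"
  shows "kernel_moment A n m = (\<Sum>h\<in>UNIV.
    of_nat (n h) * S $ h $ k * kernel_moment A (n(h := n h - 1)) (m(k := m k - 1)))"
proof -
  let ?m = "m(k := m k - 1)"
  have "kernel_moment A n m = (\<integral>w. (\<Sum>h\<in>UNIV.
      S $ h $ k * (mixed_monomial n ?m w * ((\<chi> i. cnj (w $ i)) v* A) $ h * gauss_kernel A w)) \<partial>lborel)"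
    unfolding kernel_moment_def mixed_monomial_dec_m[where m = m and k = k, OF assms(2)]
      cnj_vec_nth_eq_sum_vector_matrix_mult[OF assms(1), of _ k]
    by (simp add: sum_distrib_left sum_distrib_right mult_ac)
  also have "\<dots> = (\<Sum>h\<in>UNIV. S $ h $ k *
      (\<integral>w. mixed_monomial n ?m w * ((\<chi> i. cnj (w $ i)) v* A) $ h * gauss_kernel A w \<partial>lborel))"
    by (subst Bochner_Integration.integral_sum)
       (auto intro!: integrable_mult_right integrable_poly_bounded_mult_gauss_kernel
         poly_bounded_mult poly_bounded_mixed_monomial poly_bounded_cnj_vector_matrix_mult)
  also have "\<dots> = (\<Sum>h\<in>UNIV. S $ h $ k * (of_nat (n h) * kernel_moment A (n(h := n h - 1)) ?m))"
    by (simp only: kernel_moment_dec_n)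
  finally show ?thesis by (simp add: mult_ac)
qed

end

lemma cn_moment_recursion_n:
  assumes "pos_def_mat S" "n h \<noteq> 0"
  shows "cn_moment S n m = (\<Sum>k\<in>UNIV.
    of_nat (m k) * S $ h $ k * cn_moment S (n(h := n h - 1)) (m(k := m k - 1)))"
proof -
  obtain c where "coercive_form (matrix_inv S) c"
    using pos_def_matrix_inv_coercive[OF assms(1)] by blast
  then interpret coercive_form "matrix_inv S" c .
  show ?thesis
    unfolding cn_moment_eq_kernel_moment kernel_moment_recursion_n[where n = n and h = h,
      OF matrix_inv(1)[OF pos_def_invertible[OF assms(1)]] assms(2)]
    by (simp add: sum_divide_distrib)
qed

lemma cn_moment_recursion_m:
  assumes "pos_def_mat S" "m k \<noteq> 0"
  shows "cn_moment S n m = (\<Sum>h\<in>UNIV.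
    of_nat (n h) * S $ h $ k * cn_moment S (n(h := n h - 1)) (m(k := m k - 1)))"
proof -
  obtain c where "coercive_form (matrix_inv S) c"
    using pos_def_matrix_inv_coercive[OF assms(1)] by blast
  then interpret coercive_form "matrix_inv S" c .
  show ?thesis
    unfolding cn_moment_eq_kernel_moment kernel_moment_recursion_m[where m = m and k = k,
      OF matrix_inv(2)[OF pos_def_invertible[OF assms(1)]] assms(2)]
    by (simp add: sum_divide_distrib)
qed

theorem corollary3p7:
  fixes S :: "complex^'p^'p" and n m :: "'p \<Rightarrow> nat"
  assumes "pos_def_mat S"
  shows "(\<forall>h. n h \<noteq> 0 \<longrightarrow>
            cn_moment S n m =
              (\<Sum>k\<in>{k. m k \<noteq> 0 \<and> S $ h $ k \<noteq> 0}.
                 of_nat (m k) * S $ h $ k * cn_moment S (n(h := n h - 1)) (m(k := m k - 1))))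
       \<and> (\<forall>k. m k \<noteq> 0 \<longrightarrow>
            cn_moment S n m =
              (\<Sum>h\<in>{h. n h \<noteq> 0 \<and> S $ h $ k \<noteq> 0}.
                 of_nat (n h) * S $ h $ k * cn_moment S (n(h := n h - 1)) (m(k := m k - 1))))"
proof (intro conjI allI impI)
  fix h assume "n h \<noteq> 0"
  show "cn_moment S n m = (\<Sum>k\<in>{k. m k \<noteq> 0 \<and> S $ h $ k \<noteq> 0}.
      of_nat (m k) * S $ h $ k * cn_moment S (n(h := n h - 1)) (m(k := m k - 1)))"
    unfolding cn_moment_recursion_n[where n = n and h = h, OF assms \<open>n h \<noteq> 0\<close>]
    by (rule sum.mono_neutral_right) auto
next
  fix k assume "m k \<noteq> 0"
  show "cn_moment S n m = (\<Sum>h\<in>{h. n h \<noteq> 0 \<and> S $ h $ k \<noteq> 0}.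
      of_nat (n h) * S $ h $ k * cn_moment S (n(h := n h - 1)) (m(k := m k - 1)))"
    unfolding cn_moment_recursion_m[where m = m and k = k, OF assms \<open>m k \<noteq> 0\<close>]
    by (rule sum.mono_neutral_right) auto
qed

end
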